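(* Let $L$ be the regular language over $\{0,1\}$ given by the regular expression \[ L = 1 + 011 + 110 + 11(01)^*\Bigl[00 + 00(11)^+ + (11)^+00 + (11)^*1011 + 1101(11)^*\Bigr](10)^*11 + 11(01)^*(11)^*01 + 10(11)^*(10)^*11 . \] Then a one-dimensional Peg Solitaire configuration $w\in\{0,1\}^*$ can be reduced to a configuration with exactly one peg if and only if $w \in 0^*L0^*$. In particular, the set of configurations reducible to a single peg is a regular language.
   Context: One-dimensional Peg Solitaire: a configuration is a finite word $w=c_0c_1\cdots c_{n-1}\in\{0,1\}^*$, describing a row of $n$ consecutive sites, where $c_i=1$ means site $i$ holds a peg and $c_i=0$ means site $i$ is a hole. The board consists exactly of these $n$ sites (no sites outside the word may be used). A move (hop) takes three consecutive sites $i,i+1,i+2$ (all within the board) such that one end site and the middle site hold pegs and the other end site is a hole, moves the end peg to the hole, and removes the peg from the middle site (i.e. $110\to001$ or $011\to100$ on those three sites). A configuration can be reduced to one peg if some sequence of hops leads to a configuration with exactly one peg. In regular expressions, $+$ denotes union, $u^*$ denotes zero or more repetitions of $u$, $u^+=uu^*$, and concatenation is juxtaposition. *)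

theory Defs
  imports Main
begin

text \<open>Configurations: words over {0,1}, encoded as bool lists (True = peg = 1, False = hole = 0).\<close>

definition hop :: "bool list \<Rightarrow> bool list \<Rightarrow> bool" where
  "hop w w' \<longleftrightarrow> (\<exists>u v.
      (w = u @ [True, True, False] @ v \<and> w' = u @ [False, False, True] @ v) \<or>
      (w = u @ [False, True, True] @ v \<and> w' = u @ [True, False, False] @ v))"

definition pegs :: "bool list \<Rightarrow> nat" where
  "pegs w = length (filter id w)"

definition reducible_to_one :: "bool list \<Rightarrow> bool" where
  "reducible_to_one w \<longleftrightarrow> (\<exists>w'. hop\<^sup>*\<^sup>* w w' \<and> pegs w' = 1)"

definition conc :: "'a list set \<Rightarrow> 'a list set \<Rightarrow> 'a list set" (infixr "\<cdot>\<cdot>" 75) where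
  "A \<cdot>\<cdot> B = {u @ v | u v. u \<in> A \<and> v \<in> B}"

fun lpow :: "'a list set \<Rightarrow> nat \<Rightarrow> 'a list set" where
  "lpow A 0 = {[]}"
| "lpow A (Suc n) = A \<cdot>\<cdot> lpow A n"

definition lstar :: "'a list set \<Rightarrow> 'a list set" where
  "lstar A = (\<Union>n. lpow A n)"

definition lplus :: "'a list set \<Rightarrow> 'a list set" where
  "lplus A = A \<cdot>\<cdot> lstar A"

definition wd :: "string \<Rightarrow> bool list" where
  "wd s = map (\<lambda>c. c = CHR ''1'') s"

definition lit :: "string \<Rightarrow> bool list set" where
  "lit s = {wd s}"

definition PegL :: "bool list set" where
  "PegL =
     lit ''1'' \<union> lit ''011'' \<union> lit ''110''
   \<union> (lit ''11'' \<cdot>\<cdot> lstar (lit ''01'') \<cdot>\<cdot>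
        (lit ''00'' \<union> (lit ''00'' \<cdot>\<cdot> lplus (lit ''11'')) \<union> (lplus (lit ''11'') \<cdot>\<cdot> lit ''00'')
         \<union> (lstar (lit ''11'') \<cdot>\<cdot> lit ''1011'') \<union> (lit ''1101'' \<cdot>\<cdot> lstar (lit ''11'')))
        \<cdot>\<cdot> lstar (lit ''10'') \<cdot>\<cdot> lit ''11'')
   \<union> (lit ''11'' \<cdot>\<cdot> lstar (lit ''01'') \<cdot>\<cdot> lstar (lit ''11'') \<cdot>\<cdot> lit ''01'')
   \<union> (lit ''10'' \<cdot>\<cdot> lstar (lit ''11'') \<cdot>\<cdot> lstar (lit ''10'') \<cdot>\<cdot> lit ''11'')"

end

theory Submission imports Defs begin

(* The set X = 0*L0* and the hop relation are both regular, so each direction of the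
   equivalence becomes a finite check on the 27-state DFA for X whose states are the
   Brzozowski derivatives of a regular expression for X.
   X contains every one-peg word, and it is closed under inverse hops: for every state q,
   the state reached from q on 110 (resp. 011) accepts every suffix accepted by the state
   reached on 001 (resp. 100), as certified by a simulation relation.
   Conversely, every word of X has a peg, and every word of X with at least two pegs has a
   hop into X: running the DFA on the input together with copies that guess one hop
   online, a certificate of invariant sets shows that after an accepted input with two or
   more pegs some copy has completed a hop and accepts.  Induction on the number of pegs
   then reduces every word of X to a single peg. *)

section \<open>Concatenation and star of languages\<close>

lemma conc_iff: "x \<in> A \<cdot>\<cdot> B \<longleftrightarrow> (\<exists>u v. x = u @ v \<and> u \<in> A \<and> v \<in> B)"
  unfolding conc_def by blast

lemma conc_empty_left [simp]: "{} \<cdot>\<cdot> B = {}"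
  and conc_empty_right [simp]: "A \<cdot>\<cdot> {} = {}"
  and conc_Nil_left [simp]: "{[]} \<cdot>\<cdot> B = B"
  and conc_Nil_right [simp]: "A \<cdot>\<cdot> {[]} = A"
  by (auto simp: conc_iff)

lemma conc_assoc: "(A \<cdot>\<cdot> B) \<cdot>\<cdot> C = A \<cdot>\<cdot> (B \<cdot>\<cdot> C)"
  by (auto simp: conc_iff) (metis append.assoc)+

lemma Nil_in_conc_iff: "[] \<in> A \<cdot>\<cdot> B \<longleftrightarrow> [] \<in> A \<and> [] \<in> B"
  by (auto simp: conc_iff)

lemma Cons_in_conc_iff:
  "a # w \<in> A \<cdot>\<cdot> B \<longleftrightarrow> (\<exists>u v. w = u @ v \<and> a # u \<in> A \<and> v \<in> B) \<or> ([] \<in> A \<and> a # w \<in> B)"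
  by (auto simp: conc_iff Cons_eq_append_conv)

lemma Nil_in_lstar: "[] \<in> lstar A"
  unfolding lstar_def by (auto intro: exI[of _ 0])

lemma Cons_in_lpowD:
  "a # w \<in> lpow A n \<Longrightarrow> \<exists>u v. w = u @ v \<and> a # u \<in> A \<and> v \<in> lstar A"
proof (induction n arbitrary: w)
  case 0
  then show ?case by simp
next
  case (Suc n)
  then obtain x y where xy: "a # w = x @ y" "x \<in> A" "y \<in> lpow A n"
    by (auto simp: conc_iff)
  show ?case
  proof (cases x)
    case Nil
    then show ?thesis using xy Suc.IH by auto
  next
    case (Cons b u)
    then show ?thesis using xy by (auto simp: lstar_def)
  qed
qed

lemma Cons_in_lstar_iff:
  "a # w \<in> lstar A \<longleftrightarrow> (\<exists>u v. w = u @ v \<and> a # u \<in> A \<and> v \<in> lstar A)"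
proof
  assume "a # w \<in> lstar A"
  then show "\<exists>u v. w = u @ v \<and> a # u \<in> A \<and> v \<in> lstar A"
    using Cons_in_lpowD[of a w A] by (auto simp: lstar_def)
next
  assume "\<exists>u v. w = u @ v \<and> a # u \<in> A \<and> v \<in> lstar A"
  then obtain u v n where "w = u @ v" "a # u \<in> A" "v \<in> lpow A n"
    by (auto simp: lstar_def)
  then have "a # w \<in> lpow A (Suc n)"
    by (simp add: conc_iff) (metis append_Cons)
  then show "a # w \<in> lstar A"
    unfolding lstar_def by blast
qed

lemma replicate_in_lstar: "replicate n x \<in> lstar {[x]}"
proof -
  have "replicate n x \<in> lpow {[x]} n"
    by (induction n) (auto simp: conc_iff)
  then show ?thesis
    unfolding lstar_def by blast
qed

section \<open>Regular expressions and their derivatives\<close>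

datatype 'a rexp = Zero | One | Lit "'a list"
  | Plus "'a rexp" "'a rexp" | Times "'a rexp" "'a rexp" | Star "'a rexp"

fun lang :: "'a rexp \<Rightarrow> 'a list set" where
  "lang Zero = {}"
| "lang One = {[]}"
| "lang (Lit w) = {w}"
| "lang (Plus r s) = lang r \<union> lang s"
| "lang (Times r s) = lang r \<cdot>\<cdot> lang s"
| "lang (Star r) = lstar (lang r)"

fun nullable :: "'a rexp \<Rightarrow> bool" where
  "nullable Zero = False"
| "nullable One = True"
| "nullable (Lit w) = (w = [])"
| "nullable (Plus r s) = (nullable r \<or> nullable s)"
| "nullable (Times r s) = (nullable r \<and> nullable s)"
| "nullable (Star r) = True"

fun summands :: "'a rexp \<Rightarrow> 'a rexp list" where
  "summands (Plus r s) = r # summands s"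
| "summands r = [r]"

(* Normalising sums up to associativity and idempotence keeps the iterated derivatives
   of an expression finitely many. *)
fun mk_plus :: "'a rexp \<Rightarrow> 'a rexp \<Rightarrow> 'a rexp" where
  "mk_plus Zero s = s"
| "mk_plus (Plus r1 r2) s = (if s = Zero then Plus r1 r2 else mk_plus r1 (mk_plus r2 s))"
| "mk_plus r s = (if s = Zero then r else if r \<in> set (summands s) then s else Plus r s)"

fun mk_times :: "'a rexp \<Rightarrow> 'a rexp \<Rightarrow> 'a rexp" where
  "mk_times Zero s = Zero"
| "mk_times One s = s"
| "mk_times (Lit w) s =
     (if s = Zero then Zero else if w = [] then s else if s = One then Lit w else Times (Lit w) s)"
| "mk_times (Times r1 r2) s =
     (if s = Zero then Zero else if s = One then Times r1 r2 else mk_times r1 (mk_times r2 s))"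
| "mk_times r s = (if s = Zero then Zero else if s = One then r else Times r s)"

fun deriv :: "'a \<Rightarrow> 'a rexp \<Rightarrow> 'a rexp" where
  "deriv a Zero = Zero"
| "deriv a One = Zero"
| "deriv a (Lit w) = (case w of [] \<Rightarrow> Zero | b # v \<Rightarrow> if a = b then Lit v else Zero)"
| "deriv a (Plus r s) = mk_plus (deriv a r) (deriv a s)"
| "deriv a (Times r s) =
     (if nullable r then mk_plus (mk_times (deriv a r) s) (deriv a s) else mk_times (deriv a r) s)"
| "deriv a (Star r) = mk_times (deriv a r) (Star r)"

definition derivs :: "'a list \<Rightarrow> 'a rexp \<Rightarrow> 'a rexp" where
  "derivs w r = foldl (\<lambda>r a. deriv a r) r w"

lemma lang_summands: "r \<in> set (summands s) \<Longrightarrow> lang r \<subseteq> lang s"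
  by (induction s rule: summands.induct) auto

lemma lang_mk_plus: "lang (mk_plus r s) = lang r \<union> lang s"
proof (induction r s rule: mk_plus.induct)
  case (2 r1 r2 s)
  then show ?case by auto
qed (auto dest!: lang_summands)

lemma lang_mk_times: "lang (mk_times r s) = lang r \<cdot>\<cdot> lang s"
  by (induction r s rule: mk_times.induct) (auto simp: conc_assoc)

lemma nullable_iff: "nullable r \<longleftrightarrow> [] \<in> lang r"
  by (induction r) (auto simp: Nil_in_conc_iff Nil_in_lstar)

lemma in_lang_deriv_iff: "w \<in> lang (deriv a r) \<longleftrightarrow> a # w \<in> lang r"
proof (induction r arbitrary: w)
  case (Lit x)
  then show ?case by (cases x) auto
next
  case (Times r s)
  then show ?case
    by (auto simp: lang_mk_plus lang_mk_times nullable_iff Cons_in_conc_iff conc_iff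
        Cons_eq_append_conv)
next
  case (Star r)
  then show ?case by (auto simp: lang_mk_times Cons_in_lstar_iff conc_iff)
qed (auto simp: lang_mk_plus)

lemma in_lang_iff_nullable_derivs: "w \<in> lang r \<longleftrightarrow> nullable (derivs w r)"
proof (induction w arbitrary: r)
  case Nil
  then show ?case by (simp add: derivs_def nullable_iff)
next
  case (Cons a w)
  then show ?case by (simp add: derivs_def flip: in_lang_deriv_iff)
qed

lemma derivs_eq_foldl:
  assumes "\<And>q a. deriv a (R q) = R (\<delta> q a)"
  shows "derivs w (R q) = R (foldl \<delta> q w)"
  using assms by (induction w arbitrary: q) (simp_all add: derivs_def)

section \<open>Peg solitaire\<close>

lemma pegs_hop: "hop w w' \<Longrightarrow> pegs w = Suc (pegs w')"
  unfolding hop_def pegs_def by auto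

lemma pegs_snoc: "pegs (w @ [a]) = pegs w + of_bool a"
  by (simp add: pegs_def)

lemma pegs_eq_1E:
  assumes "pegs w = 1"
  obtains m n where "w = replicate m False @ True # replicate n False"
proof -
  from assms have "\<exists>m n. w = replicate m False @ True # replicate n False"
  proof (induction w)
    case Nil
    then show ?case by (simp add: pegs_def)
  next
    case (Cons a w)
    show ?case
    proof (cases a)
      case True
      with Cons.prems have "filter id w = []"
        by (simp add: pegs_def)
      then have "w = replicate (length w) False"
        by (metis (full_types) filter_empty_conv id_apply replicate_length_same)
      with True have "a # w = replicate 0 False @ True # replicate (length w) False"
        by simp
      then show ?thesis by blast
    next
      case False
      with Cons obtain m n where "w = replicate m False @ True # replicate n False"
        by (auto simp: pegs_def)
      with False have "a # w = replicate (Suc m) False @ True # replicate n False"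
        by simp
      then show ?thesis by blast
    qed
  qed
  with that show ?thesis by blast
qed

lemma reducible_to_one_if_descends:
  assumes nonzero: "\<And>w. w \<in> X \<Longrightarrow> pegs w \<noteq> 0"
    and descends: "\<And>w. w \<in> X \<Longrightarrow> 2 \<le> pegs w \<Longrightarrow> \<exists>w'. hop w w' \<and> w' \<in> X"
  shows "w \<in> X \<Longrightarrow> reducible_to_one w"
proof (induction "pegs w" arbitrary: w rule: less_induct)
  case less
  show ?case
  proof (cases "pegs w = 1")
    case True
    then show ?thesis unfolding reducible_to_one_def by blast
  next
    case False
    with nonzero[OF less.prems] have "2 \<le> pegs w" by simp
    with descends[OF less.prems] obtain w' where "hop w w'" "w' \<in> X" by blast
    moreover from \<open>hop w w'\<close> have "pegs w' < pegs w" by (simp add: pegs_hop)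
    ultimately show ?thesis
      using less.hyps unfolding reducible_to_one_def
      by (meson converse_rtranclp_into_rtranclp)
  qed
qed

lemma mem_if_reducible_to_one:
  assumes one_peg: "\<And>w. pegs w = 1 \<Longrightarrow> w \<in> X"
    and inverse_hop: "\<And>w w'. hop w w' \<Longrightarrow> w' \<in> X \<Longrightarrow> w \<in> X"
    and "reducible_to_one w"
  shows "w \<in> X"
proof -
  from \<open>reducible_to_one w\<close> obtain w' where "hop\<^sup>*\<^sup>* w w'" "pegs w' = 1"
    unfolding reducible_to_one_def by blast
  from this(1) show ?thesis
    by (induction rule: converse_rtranclp_induct)
      (auto intro: one_peg[OF \<open>pegs w' = 1\<close>] inverse_hop)
qed

lemma accepts_if_simulated:
  assumes step: "\<And>p q a. (p, q) \<in> S \<Longrightarrow> (\<delta> p a, \<delta> q a) \<in> S"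
    and final: "\<And>p q. (p, q) \<in> S \<Longrightarrow> F p \<Longrightarrow> F q"
  shows "(p, q) \<in> S \<Longrightarrow> F (foldl \<delta> p w) \<Longrightarrow> F (foldl \<delta> q w)"
  by (induction w arbitrary: p q) (auto intro: step final)

lemma accepts_if_hop_accepts:
  assumes step: "\<And>p q a. (p, q) \<in> S \<Longrightarrow> (\<delta> p a, \<delta> q a) \<in> S"
    and final: "\<And>p q. (p, q) \<in> S \<Longrightarrow> F p \<Longrightarrow> F q"
    and right_hop: "\<And>q. (foldl \<delta> q [False, False, True], foldl \<delta> q [True, True, False]) \<in> S"
    and left_hop: "\<And>q. (foldl \<delta> q [True, False, False], foldl \<delta> q [False, True, True]) \<in> S"
    and "hop w w'" "F (foldl \<delta> q0 w')"
  shows "F (foldl \<delta> q0 w)"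
proof -
  from \<open>hop w w'\<close> obtain u v x y where
    w: "w = u @ x @ v" and w': "w' = u @ y @ v"
    and window: "(foldl \<delta> (foldl \<delta> q0 u) y, foldl \<delta> (foldl \<delta> q0 u) x) \<in> S"
    unfolding hop_def using right_hop left_hop by blast
  show ?thesis
    using accepts_if_simulated[OF step final window, where w = v] \<open>F (foldl \<delta> q0 w')\<close>
    by (simp add: w w')
qed

section \<open>Running an automaton on a hopped word\<close>

(* States of an automaton that runs the DFA on the input with one hop applied at a position
   guessed online.  Before q and After q: the hop window lies after, resp. before, the input
   read so far.  Started t q and Jumped t q: the window has been entered with t, resp. t 1,
   fed to the DFA as \<not> t, resp. (\<not> t) 0; it is closed by \<not> t, fed as t. *)
datatype 's hop_track = Before 's | Started bool 's | Jumped bool 's | After 's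

fun track_step :: "('s \<Rightarrow> bool \<Rightarrow> 's) \<Rightarrow> 's hop_track \<Rightarrow> bool \<Rightarrow> 's hop_track list" where
  "track_step \<delta> (Before q) a = [Before (\<delta> q a), Started a (\<delta> q (\<not> a))]"
| "track_step \<delta> (Started t q) a = (if a then [Jumped t (\<delta> q False)] else [])"
| "track_step \<delta> (Jumped t q) a = (if a = (\<not> t) then [After (\<delta> q t)] else [])"
| "track_step \<delta> (After q) a = [After (\<delta> q a)]"

definition tracks :: "('s \<Rightarrow> bool \<Rightarrow> 's) \<Rightarrow> 's hop_track set \<Rightarrow> bool list \<Rightarrow> 's hop_track set" where
  "tracks \<delta> X w = foldl (\<lambda>X a. \<Union>x\<in>X. set (track_step \<delta> x a)) X w"

lemma tracks_snoc: "tracks \<delta> X (w @ [a]) = (\<Union>x\<in>tracks \<delta> X w. set (track_step \<delta> x a))"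
  by (simp add: tracks_def)

lemma hop_snoc: "hop w w' \<Longrightarrow> hop (w @ [a]) (w' @ [a])"
  unfolding hop_def by fastforce

lemma tracks_sound:
  "x \<in> tracks \<delta> {Before q0} w \<Longrightarrow>
    (case x of
      Before q \<Rightarrow> q = foldl \<delta> q0 w
    | Started t q \<Rightarrow> (\<exists>u. w = u @ [t] \<and> q = foldl \<delta> q0 (u @ [\<not> t]))
    | Jumped t q \<Rightarrow> (\<exists>u. w = u @ [t, True] \<and> q = foldl \<delta> q0 (u @ [\<not> t, False]))
    | After q \<Rightarrow> (\<exists>w'. hop w w' \<and> q = foldl \<delta> q0 w'))"
proof (induction w arbitrary: x rule: rev_induct)
  case Nil
  then show ?case by (simp add: tracks_def)
next
  case (snoc a w)
  then obtain y where y: "y \<in> tracks \<delta> {Before q0} w" "x \<in> set (track_step \<delta> y a)"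
    by (auto simp: tracks_snoc)
  note IH = snoc.IH[OF y(1)]
  show ?case
  proof (cases y)
    case (Before q)
    then show ?thesis using y(2) IH by auto
  next
    case (Started t q)
    then show ?thesis using y(2) IH by (cases a) auto
  next
    case (Jumped t q)
    then obtain u where u: "w = u @ [t, True]" "q = foldl \<delta> q0 (u @ [\<not> t, False])"
      using IH by auto
    from y(2) Jumped have "a = (\<not> t)" and x: "x = After (\<delta> q t)"
      by (auto split: if_splits)
    then have "hop (w @ [a]) (u @ [\<not> t, False, t])"
      unfolding hop_def u by (cases t) auto
    with x u(2) show ?thesis by auto
  next
    case (After q)
    then obtain w' where "hop w w'" "q = foldl \<delta> q0 w'"
      using IH by auto
    then show ?thesis
      using y(2) After by (auto intro!: exI[of _ "w' @ [a]"] hop_snoc)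
  qed
qed

lemma tracks_cert_invariant:
  fixes C :: "'s \<Rightarrow> nat \<Rightarrow> 's hop_track list list"
  assumes init: "\<exists>S\<in>set (C q0 0). set S \<subseteq> {Before q0}"
    and step: "\<And>q c S a. c \<le> 2 \<Longrightarrow> S \<in> set (C q c) \<Longrightarrow>
      \<exists>S'\<in>set (C (\<delta> q a) (min 2 (c + of_bool a))). set S' \<subseteq> (\<Union>x\<in>set S. set (track_step \<delta> x a))"
  shows "\<exists>S\<in>set (C (foldl \<delta> q0 w) (min 2 (pegs w))). set S \<subseteq> tracks \<delta> {Before q0} w"
proof (induction w rule: rev_induct)
  case Nil
  then show ?case using init by (simp add: pegs_def tracks_def)
next
  case (snoc a w)
  then obtain S where S: "S \<in> set (C (foldl \<delta> q0 w) (min 2 (pegs w)))"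
    "set S \<subseteq> tracks \<delta> {Before q0} w" by blast
  obtain S' where S': "S' \<in> set (C (\<delta> (foldl \<delta> q0 w) a) (min 2 (min 2 (pegs w) + of_bool a)))"
    "set S' \<subseteq> (\<Union>x\<in>set S. set (track_step \<delta> x a))"
    using step[OF min.cobounded1 S(1), of a] by blast
  have "min 2 (min 2 (pegs w) + of_bool a) = min 2 (pegs (w @ [a]))"
    by (simp add: pegs_snoc)
  moreover have "set S' \<subseteq> tracks \<delta> {Before q0} (w @ [a])"
    using S'(2) S(2) unfolding tracks_snoc by blast
  ultimately show ?case
    using S'(1) by auto
qed

section \<open>A DFA for \<open>0\<^sup>* L 0\<^sup>*\<close>\<close>

abbreviation padded_PegL :: "bool list set" where
  "padded_PegL \<equiv> lstar (lit ''0'') \<cdot>\<cdot> PegL \<cdot>\<cdot> lstar (lit ''0'')"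

definition peg_rexp :: "bool rexp" where
  "peg_rexp =
     Plus (Plus (Plus (Plus (Plus (Lit (wd ''1'')) (Lit (wd ''011''))) (Lit (wd ''110'')))
       (Times (Lit (wd ''11'')) (Times (Star (Lit (wd ''01'')))
         (Times (Plus (Plus (Plus (Plus (Lit (wd ''00''))
                   (Times (Lit (wd ''00'')) (Times (Lit (wd ''11'')) (Star (Lit (wd ''11''))))))
                 (Times (Times (Lit (wd ''11'')) (Star (Lit (wd ''11'')))) (Lit (wd ''00''))))
               (Times (Star (Lit (wd ''11''))) (Lit (wd ''1011''))))
             (Times (Lit (wd ''1101'')) (Star (Lit (wd ''11'')))))
           (Times (Star (Lit (wd ''10''))) (Lit (wd ''11'')))))))
       (Times (Lit (wd ''11'')) (Times (Star (Lit (wd ''01'')))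
         (Times (Star (Lit (wd ''11''))) (Lit (wd ''01''))))))
     (Times (Lit (wd ''10'')) (Times (Star (Lit (wd ''11'')))
       (Times (Star (Lit (wd ''10''))) (Lit (wd ''11'')))))"

definition padded_rexp :: "bool rexp" where
  "padded_rexp = Times (Star (Lit (wd ''0''))) (Times peg_rexp (Star (Lit (wd ''0''))))"

lemma lang_padded_rexp: "lang padded_rexp = padded_PegL"
  by (simp add: padded_rexp_def peg_rexp_def PegL_def lit_def lplus_def)

datatype state =
    Q0 | Q1 | Q2 | Q3 | Q4 | Q5 | Q6 | Q7 | Q8 | Q9 | Q10 | Q11 | Q12 | Q13 | Q14 | Q15 | Q16 | Q17
    | Q18 | Q19 | Q20 | Q21 | Q22 | Q23 | Q24 | Q25 | Q26

definition all_states :: "state list" where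
  "all_states = [Q0, Q1, Q2, Q3, Q4, Q5, Q6, Q7, Q8, Q9, Q10, Q11, Q12, Q13, Q14, Q15, Q16, Q17,
    Q18, Q19, Q20, Q21, Q22, Q23, Q24, Q25, Q26]"

fun dfa_step :: "state \<Rightarrow> bool \<Rightarrow> state" where
  "dfa_step Q0 False = Q1" | "dfa_step Q0 True = Q2"
| "dfa_step Q1 False = Q1" | "dfa_step Q1 True = Q3"
| "dfa_step Q2 False = Q4" | "dfa_step Q2 True = Q5"
| "dfa_step Q3 False = Q4" | "dfa_step Q3 True = Q6"
| "dfa_step Q4 False = Q7" | "dfa_step Q4 True = Q8"
| "dfa_step Q5 False = Q9" | "dfa_step Q5 True = Q10"
| "dfa_step Q6 False = Q11" | "dfa_step Q6 True = Q10"
| "dfa_step Q7 False = Q7" | "dfa_step Q7 True = Q12"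
| "dfa_step Q8 False = Q13" | "dfa_step Q8 True = Q4"
| "dfa_step Q9 False = Q14" | "dfa_step Q9 True = Q15"
| "dfa_step Q10 False = Q16" | "dfa_step Q10 True = Q17"
| "dfa_step Q11 False = Q14" | "dfa_step Q11 True = Q15"
| "dfa_step Q12 False = Q12" | "dfa_step Q12 True = Q12"
| "dfa_step Q13 False = Q12" | "dfa_step Q13 True = Q18"
| "dfa_step Q14 False = Q7" | "dfa_step Q14 True = Q8"
| "dfa_step Q15 False = Q19" | "dfa_step Q15 True = Q10"
| "dfa_step Q16 False = Q12" | "dfa_step Q16 True = Q20"
| "dfa_step Q17 False = Q21" | "dfa_step Q17 True = Q22"
| "dfa_step Q18 False = Q13" | "dfa_step Q18 True = Q7"
| "dfa_step Q19 False = Q14" | "dfa_step Q19 True = Q15"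
| "dfa_step Q20 False = Q12" | "dfa_step Q20 True = Q13"
| "dfa_step Q21 False = Q13" | "dfa_step Q21 True = Q23"
| "dfa_step Q22 False = Q16" | "dfa_step Q22 True = Q24"
| "dfa_step Q23 False = Q7" | "dfa_step Q23 True = Q25"
| "dfa_step Q24 False = Q26" | "dfa_step Q24 True = Q22"
| "dfa_step Q25 False = Q13" | "dfa_step Q25 True = Q23"
| "dfa_step Q26 False = Q13" | "dfa_step Q26 True = Q7"

(* access_word q is a shortest word leading from Q0 to q. *)
fun access_word :: "state \<Rightarrow> string" where
  "access_word Q0 = ''''"
| "access_word Q1 = ''0''"
| "access_word Q2 = ''1''"
| "access_word Q3 = ''01''"
| "access_word Q4 = ''10''"
| "access_word Q5 = ''11''"
| "access_word Q6 = ''011''"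
| "access_word Q7 = ''100''"
| "access_word Q8 = ''101''"
| "access_word Q9 = ''110''"
| "access_word Q10 = ''111''"
| "access_word Q11 = ''0110''"
| "access_word Q12 = ''1001''"
| "access_word Q13 = ''1010''"
| "access_word Q14 = ''1100''"
| "access_word Q15 = ''1101''"
| "access_word Q16 = ''1110''"
| "access_word Q17 = ''1111''"
| "access_word Q18 = ''10101''"
| "access_word Q19 = ''11010''"
| "access_word Q20 = ''11101''"
| "access_word Q21 = ''11110''"
| "access_word Q22 = ''11111''"
| "access_word Q23 = ''111101''"
| "access_word Q24 = ''111111''"
| "access_word Q25 = ''1111011''"
| "access_word Q26 = ''1111110''"

definition state_rexp :: "state \<Rightarrow> bool rexp" where
  "state_rexp q = derivs (wd (access_word q)) padded_rexp"

definition accepting :: "state \<Rightarrow> bool" where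
  "accepting q \<longleftrightarrow> q \<in> {Q2, Q3, Q4, Q6, Q7, Q9, Q11, Q14, Q15, Q19, Q23}"

fun sim_above :: "state \<Rightarrow> state list" where
  "sim_above Q0 = [Q0, Q1]"
| "sim_above Q1 = [Q1]"
| "sim_above Q2 = [Q2, Q3, Q9, Q11, Q19]"
| "sim_above Q3 = [Q3, Q9, Q11, Q19]"
| "sim_above Q4 = [Q4, Q14, Q23]"
| "sim_above Q5 = [Q5, Q6, Q15]"
| "sim_above Q6 = [Q6, Q15]"
| "sim_above Q7 = [Q2, Q3, Q4, Q6, Q7, Q9, Q11, Q14, Q15, Q19, Q23]"
| "sim_above Q8 = [Q8, Q21, Q25]"
| "sim_above Q9 = [Q3, Q9, Q11, Q19]"
| "sim_above Q10 = [Q10]"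
| "sim_above Q11 = [Q3, Q9, Q11, Q19]"
| "sim_above Q12 = [Q0, Q1, Q2, Q3, Q4, Q5, Q6, Q7, Q8, Q9, Q10, Q11, Q12, Q13, Q14, Q15, Q16,
      Q17, Q18, Q19, Q20, Q21, Q22, Q23, Q24, Q25, Q26]"
| "sim_above Q13 = [Q1, Q4, Q13, Q14, Q23]"
| "sim_above Q14 = [Q4, Q14, Q23]"
| "sim_above Q15 = [Q6, Q15]"
| "sim_above Q16 = [Q4, Q14, Q16, Q23]"
| "sim_above Q17 = [Q17]"
| "sim_above Q18 = [Q0, Q1, Q3, Q8, Q9, Q11, Q18, Q19, Q21, Q25, Q26]"
| "sim_above Q19 = [Q3, Q9, Q11, Q19]"
| "sim_above Q20 = [Q8, Q20, Q21, Q25]"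
| "sim_above Q21 = [Q8, Q21, Q25]"
| "sim_above Q22 = [Q2, Q3, Q9, Q10, Q11, Q19, Q22]"
| "sim_above Q23 = [Q4, Q14, Q23]"
| "sim_above Q24 = [Q0, Q1, Q5, Q6, Q15, Q17, Q24]"
| "sim_above Q25 = [Q8, Q21, Q25]"
| "sim_above Q26 = [Q0, Q1, Q3, Q8, Q9, Q11, Q18, Q19, Q21, Q25, Q26]"

(* tracker_cert q ! c lists sets of tracker states; after any input w that leads the DFA to q
   with min 2 (pegs w) = c, one of these sets consists of tracker states reachable on w. *)
fun tracker_cert :: "state \<Rightarrow> state hop_track list list list" where
  "tracker_cert Q0 = [[[Before Q0]], [], []]"
| "tracker_cert Q1 = [[[Started False Q3, Before Q1], [Started False Q2, Before Q1]], [], []]"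
| "tracker_cert Q2 = [[], [[Started True Q1, Before Q2]], []]"
| "tracker_cert Q3 = [[], [[Started True Q1, Jumped False Q4, Before Q3]], []]"
| "tracker_cert Q4 = [
      [],
      [[Started False Q6, Before Q4], [Started False Q5, Before Q4]],
      [[Started True Q13, Jumped True Q7, After Q4, Before Q4],
       [Started True Q13, Jumped True Q7, After Q4, After Q12, After Q14, Before Q4],
       [Started True Q13, Jumped True Q7, After Q4, After Q12, Before Q4],
       [Started True Q13, Jumped True Q7, After Q4, After Q14, Before Q4],
       [Started True Q13, Jumped True Q7, After Q14, Before Q4]]]"
| "tracker_cert Q5 = [[], [], [[Started True Q4, Jumped True Q1, Before Q5]]]"
| "tracker_cert Q6 = [[], [], [[Started True Q4, Jumped True Q1, After Q7, Before Q6]]]"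
| "tracker_cert Q7 = [
      [],
      [[Started False Q12, Before Q7], [Started False Q8, Before Q7]],
      [[Started False Q25, After Q7, After Q12, Before Q7],
       [Started False Q12, After Q7, After Q12, Before Q7],
       [Started False Q8, After Q7, After Q12, Before Q7],
       [Started True Q13, Jumped False Q16, After Q7, Before Q7],
       [Started False Q12, After Q7, Before Q7],
       [Started False Q8, After Q7, Before Q7],
       [Started False Q25, After Q7, Before Q7],
       [Started True Q13, Jumped False Q16, After Q7, After Q12, Before Q7],
       [Started True Q13, Jumped True Q12, After Q7, Before Q7],
       [Started True Q13, Jumped True Q12, After Q7, After Q12, Before Q7]]]"
| "tracker_cert Q8 = [
      [],
      [],
      [[Started True Q7, Jumped False Q19, After Q8, After Q12, Before Q8],
       [Started True Q7, Jumped True Q12, After Q8, Before Q8],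
       [Started True Q7, Jumped False Q19, After Q8, Before Q8],
       [Started True Q7, Jumped True Q12, After Q8, After Q12, Before Q8],
       [Started True Q7, Jumped False Q11, Before Q8],
       [Started True Q7, Jumped False Q9, Before Q8]]]"
| "tracker_cert Q9 = [[], [], [[Started False Q10, After Q3, Before Q9]]]"
| "tracker_cert Q10 = [
      [],
      [],
      [[Started True Q9, Jumped True Q7, Before Q10],
       [Started True Q19, Jumped True Q7, After Q10, After Q12, Before Q10],
       [Started True Q11, Jumped True Q7, After Q12, Before Q10]]]"
| "tracker_cert Q11 = [[], [], [[Started False Q10, After Q3, After Q7, Before Q11]]]"
| "tracker_cert Q12 = [
      [],
      [],
      [[Started True Q7, Jumped True Q12, After Q12, Before Q12],
       [Started False Q13, After Q12, Before Q12],
       [Started True Q12, Jumped False Q12, After Q12, Before Q12],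
       [Started False Q12, After Q12, Before Q12],
       [Started True Q12, Jumped True Q12, After Q12, Before Q12],
       [Started True Q7, Jumped False Q12, After Q12, Before Q12],
       [Started False Q20, After Q12, Before Q12],
       [Started True Q7, Jumped False Q12, Before Q12],
       [Started True Q12, Jumped False Q13, Before Q12],
       [Started True Q12, Jumped False Q13, After Q12, Before Q12],
       [Started True Q7, Jumped False Q13, After Q12, Before Q12],
       [Started True Q7, Jumped False Q13, Before Q12],
       [Started False Q12, Before Q12],
       [Started True Q12, Jumped True Q7, After Q12, Before Q12],
       [Started False Q18, After Q12, Before Q12],
       [Started False Q18, Before Q12],
       [Started True Q12, Jumped False Q12, Before Q12]]]"
| "tracker_cert Q13 = [
      [],
      [],
      [[Started True Q12, Jumped True Q12, After Q12, After Q13, Before Q13],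
       [Started False Q23, After Q12, After Q13, Before Q13],
       [Started False Q7, After Q12, After Q13, Before Q13],
       [Started False Q4, After Q12, After Q13, Before Q13],
       [Started False Q4, After Q13, Before Q13],
       [Started False Q23, After Q13, Before Q13],
       [Started False Q7, Before Q13],
       [Started False Q4, Before Q13],
       [Started False Q7, After Q13, Before Q13]]]"
| "tracker_cert Q14 = [
      [],
      [],
      [[Started False Q15, After Q4, Before Q14],
       [Started False Q15, After Q4, After Q7, Before Q14],
       [Started False Q15, After Q12, After Q14, Before Q14],
       [Started False Q15, After Q14, Before Q14]]]"
| "tracker_cert Q15 = [
      [],
      [],
      [[Started True Q14, Jumped False Q16, After Q6, After Q12, Before Q15],
       [Started True Q14, Jumped False Q16, After Q6, Before Q15],
       [Started True Q14, Jumped False Q16, After Q12, After Q15, Before Q15],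
       [Started True Q14, Jumped False Q16, After Q15, Before Q15]]]"
| "tracker_cert Q16 = [
      [],
      [],
      [[Started False Q24, After Q12, Before Q16],
       [Started False Q17, After Q12, After Q16, Before Q16],
       [Started False Q17, After Q12, Before Q16],
       [Started False Q24, After Q12, After Q16, Before Q16]]]"
| "tracker_cert Q17 = [
      [],
      [],
      [[Started True Q16, Jumped True Q14, Before Q17],
       [Started True Q16, Jumped True Q14, After Q12, Before Q17],
       [Started True Q16, Jumped True Q14, After Q12, After Q17, Before Q17]]]"
| "tracker_cert Q18 = [
      [],
      [],
      [[Started True Q12, Jumped False Q7, After Q18, Before Q18],
       [Started True Q12, Jumped True Q12, After Q12, After Q18, Before Q18],
       [Started True Q12, Jumped False Q7, Before Q18],
       [Started True Q12, Jumped False Q7, After Q12, After Q18, Before Q18]]]"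
| "tracker_cert Q19 = [
      [],
      [],
      [[Started False Q10, After Q19, Before Q19],
       [Started False Q10, After Q11, Before Q19],
       [Started False Q10, After Q12, After Q19, Before Q19],
       [Started False Q10, After Q11, After Q12, Before Q19]]]"
| "tracker_cert Q20 = [
      [],
      [],
      [[Started True Q12, Jumped False Q21, After Q12, Before Q20],
       [Started True Q12, Jumped False Q26, After Q12, Before Q20],
       [Started True Q12, Jumped False Q21, After Q12, After Q20, Before Q20],
       [Started True Q12, Jumped False Q26, After Q12, After Q20, Before Q20]]]"
| "tracker_cert Q21 = [
      [],
      [],
      [[Started False Q22, After Q8, After Q12, Before Q21],
       [Started False Q22, After Q8, After Q12, After Q21, Before Q21],
       [Started False Q22, After Q8, Before Q21]]]"
| "tracker_cert Q22 = [
      [],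
      [],
      [[Started True Q21, Jumped True Q12, After Q12, Before Q22],
       [Started True Q21, Jumped True Q12, After Q12, After Q22, Before Q22],
       [Started True Q26, Jumped True Q12, After Q12, After Q22, Before Q22],
       [Started True Q26, Jumped True Q12, Before Q22],
       [Started True Q26, Jumped True Q12, After Q12, Before Q22],
       [Started True Q21, Jumped True Q12, Before Q22]]]"
| "tracker_cert Q23 = [
      [],
      [],
      [[Started True Q13, Jumped False Q16, After Q4, After Q12, After Q23, Before Q23],
       [Started True Q13, Jumped False Q16, After Q4, Before Q23],
       [Started True Q13, Jumped True Q7, After Q4, After Q12, Before Q23],
       [Started True Q13, Jumped True Q7, After Q4, After Q12, After Q23, Before Q23],
       [Started True Q13, Jumped False Q16, After Q4, After Q12, Before Q23]]]"
| "tracker_cert Q24 = [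
      [],
      [],
      [[Started True Q16, Jumped True Q13, After Q12, Before Q24],
       [Started True Q16, Jumped True Q13, Before Q24],
       [Started True Q16, Jumped True Q13, After Q12, After Q24, Before Q24]]]"
| "tracker_cert Q25 = [
      [],
      [],
      [[Started True Q7, Jumped True Q12, After Q8, After Q12, After Q25, Before Q25],
       [Started True Q7, Jumped True Q12, After Q8, After Q12, Before Q25]]]"
| "tracker_cert Q26 = [
      [],
      [],
      [[Started False Q22, After Q18, Before Q26],
       [Started False Q22, After Q12, After Q18, After Q26, Before Q26],
       [Started False Q22, After Q12, After Q18, Before Q26]]]"

lemma in_all_states: "q \<in> set all_states"
  by (cases q) (simp_all add: all_states_def)

lemma deriv_state_rexp_cert:
  "\<forall>q\<in>set all_states. \<forall>a. deriv a (state_rexp q) = state_rexp (dfa_step q a)"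
  by code_simp

lemma accepting_cert: "\<forall>q\<in>set all_states. accepting q \<longleftrightarrow> nullable (state_rexp q)"
  by code_simp

lemma sim_above_cert:
  "\<forall>p\<in>set all_states. \<forall>q\<in>set (sim_above p). (accepting p \<longrightarrow> accepting q) \<and>
     (\<forall>a. dfa_step q a \<in> set (sim_above (dfa_step p a)))"
  by code_simp

lemma hop_window_cert:
  "\<forall>q\<in>set all_states.
     foldl dfa_step q [True, True, False] \<in> set (sim_above (foldl dfa_step q [False, False, True])) \<and>
     foldl dfa_step q [False, True, True] \<in> set (sim_above (foldl dfa_step q [True, False, False]))"
  by code_simp

lemma tracker_cert_step:
  "\<forall>q\<in>set all_states. \<forall>c\<in>set [0, 1, 2]. \<forall>S\<in>set (tracker_cert q ! c). \<forall>a.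
     \<exists>S'\<in>set (tracker_cert (dfa_step q a) ! min 2 (c + of_bool a)).
       set S' \<subseteq> set (concat (map (\<lambda>x. track_step dfa_step x a) S))"
  by code_simp

lemma tracker_cert_accepting:
  "\<forall>q\<in>set all_states. accepting q \<longrightarrow> tracker_cert q ! 0 = [] \<and>
     (\<forall>S\<in>set (tracker_cert q ! 2). \<exists>x\<in>set S. case x of After r \<Rightarrow> accepting r | _ \<Rightarrow> False)"
  by code_simp

lemma deriv_state_rexp: "deriv a (state_rexp q) = state_rexp (dfa_step q a)"
  using deriv_state_rexp_cert in_all_states by blast

lemma accepting_iff_nullable: "accepting q \<longleftrightarrow> nullable (state_rexp q)"
  using accepting_cert in_all_states by blast

lemma sim_above_step: "q \<in> set (sim_above p) \<Longrightarrow> dfa_step q a \<in> set (sim_above (dfa_step p a))"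
  using sim_above_cert in_all_states by blast

lemma sim_above_accepting: "q \<in> set (sim_above p) \<Longrightarrow> accepting p \<Longrightarrow> accepting q"
  using sim_above_cert in_all_states by blast

lemma padded_PegL_iff_accepting: "w \<in> padded_PegL \<longleftrightarrow> accepting (foldl dfa_step Q0 w)"
proof -
  have "state_rexp Q0 = padded_rexp"
    by (simp add: state_rexp_def derivs_def wd_def)
  then have "derivs w padded_rexp = state_rexp (foldl dfa_step Q0 w)"
    using derivs_eq_foldl[OF deriv_state_rexp] by metis
  then show ?thesis
    by (simp add: accepting_iff_nullable in_lang_iff_nullable_derivs flip: lang_padded_rexp)
qed

lemma one_peg_in_padded_PegL: "pegs w = 1 \<Longrightarrow> w \<in> padded_PegL"
proof (erule pegs_eq_1E)
  fix m n
  assume "w = replicate m False @ True # replicate n False"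
  then have w: "w = replicate m False @ [True] @ replicate n False"
    by simp
  have "[True] \<in> PegL"
    by (simp add: PegL_def lit_def wd_def)
  moreover have "replicate k False \<in> lstar (lit ''0'')" for k
    using replicate_in_lstar[of k False] by (simp add: lit_def wd_def)
  ultimately show "w \<in> padded_PegL"
    unfolding w conc_iff by blast
qed

lemma padded_PegL_inverse_hop:
  assumes "hop w w'" "w' \<in> padded_PegL"
  shows "w \<in> padded_PegL"
proof -
  let ?S = "{(p, q). q \<in> set (sim_above p)}"
  have "(foldl dfa_step q [False, False, True], foldl dfa_step q [True, True, False]) \<in> ?S"
    and "(foldl dfa_step q [True, False, False], foldl dfa_step q [False, True, True]) \<in> ?S" for q
    using hop_window_cert in_all_states by auto
  with accepts_if_hop_accepts[of ?S dfa_step accepting] assms show ?thesis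
    by (simp add: padded_PegL_iff_accepting sim_above_step sim_above_accepting)
qed

lemma tracker_invariant:
  "\<exists>S\<in>set (tracker_cert (foldl dfa_step Q0 w) ! min 2 (pegs w)).
     set S \<subseteq> tracks dfa_step {Before Q0} w"
proof (rule tracks_cert_invariant[where C = "\<lambda>q c. tracker_cert q ! c"])
  fix q c S a
  assume "c \<le> 2" "S \<in> set (tracker_cert q ! c)"
  moreover have "c \<in> set [0, 1, 2]"
    using \<open>c \<le> 2\<close> by auto
  ultimately have "\<exists>S'\<in>set (tracker_cert (dfa_step q a) ! min 2 (c + of_bool a)).
      set S' \<subseteq> set (concat (map (\<lambda>x. track_step dfa_step x a) S))"
    using tracker_cert_step in_all_states by blast
  then show "\<exists>S'\<in>set (tracker_cert (dfa_step q a) ! min 2 (c + of_bool a)).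
      set S' \<subseteq> (\<Union>x\<in>set S. set (track_step dfa_step x a))"
    by simp
qed simp

lemma padded_PegL_pegs_nonzero:
  assumes "w \<in> padded_PegL"
  shows "pegs w \<noteq> 0"
proof
  assume "pegs w = 0"
  with tracker_invariant[of w] have "tracker_cert (foldl dfa_step Q0 w) ! 0 \<noteq> []"
    by auto
  with assms tracker_cert_accepting in_all_states show False
    by (simp add: padded_PegL_iff_accepting)
qed

lemma padded_PegL_descends:
  assumes "w \<in> padded_PegL" "2 \<le> pegs w"
  shows "\<exists>w'. hop w w' \<and> w' \<in> padded_PegL"
proof -
  from tracker_invariant[of w] \<open>2 \<le> pegs w\<close> obtain S where
    S: "S \<in> set (tracker_cert (foldl dfa_step Q0 w) ! 2)" "set S \<subseteq> tracks dfa_step {Before Q0} w"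
    by (auto simp: min_absorb1)
  from assms(1) have "accepting (foldl dfa_step Q0 w)"
    by (simp add: padded_PegL_iff_accepting)
  with S(1) tracker_cert_accepting in_all_states obtain x where
    "x \<in> set S" "case x of After r \<Rightarrow> accepting r | _ \<Rightarrow> False"
    by blast
  with S(2) obtain r where "After r \<in> tracks dfa_step {Before Q0} w" "accepting r"
    by (auto split: hop_track.splits)
  moreover from tracks_sound[OF this(1)] obtain w' where "hop w w'" "r = foldl dfa_step Q0 w'"
    by auto
  ultimately show ?thesis
    by (auto simp: padded_PegL_iff_accepting)
qed

theorem theorem1:
  fixes w :: "bool list"
  shows "reducible_to_one w \<longleftrightarrow> w \<in> lstar (lit ''0'') \<cdot>\<cdot> PegL \<cdot>\<cdot> lstar (lit ''0'')"
proof
  assume "reducible_to_one w"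
  then show "w \<in> padded_PegL"
    using mem_if_reducible_to_one one_peg_in_padded_PegL padded_PegL_inverse_hop by blast
next
  assume "w \<in> padded_PegL"
  then show "reducible_to_one w"
    using reducible_to_one_if_descends padded_PegL_pegs_nonzero padded_PegL_descends by blast
qed

end
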